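(* Let $n\in\mathbb{N}$, $k\geq2$, $u\equiv a_{i_1}a_{i_2}\cdots a_{i_k}$ and $x$ with $x,a_{i_j}\in\{a_1,\dots,a_n\}$, and let $S=sgp^+\langle a_1,\dots,a_n\mid u=x\rangle$, where $\{u=x\}$ is a Gröbner–Shirshov basis. Then $S$ is prefix-automatic.
   Context: $A^*$ is the free monoid (empty word $\varepsilon$), $A^+=A^*\setminus\{\varepsilon\}$. $sgp^+\langle A\mid R\rangle$ is $A^+$ modulo the congruence generated by $R$. Gröbner–Shirshov bases: fix a well-ordering of $A$ and the deg-lex ordering on $A^*$ (length, then lexicographic). For monic polynomials $f,g$ in the free associative algebra $F\langle A\rangle$ over a field with leading words $\bar f,\bar g$: if $w\equiv\bar f b\equiv a\bar g$ with $|\bar f|+|\bar g|>|w|$, $(f,g)_w=fb-ag$; if $w\equiv\bar f\equiv a\bar g b$, $(f,g)_w=f-agb$; trivial modulo $(R,w)$ if it equals $\sum\alpha_i a_i s_i b_i$ with $s_i\in R$, $a_i\bar{s_i}b_i<w$. $R$ is a Gröbner–Shirshov basis if all compositions are trivial; $\{u=x\}$ is one if $\{u-x\}$ is. Automaticity: regular = accepted by a finite automaton. With $\$\notin A$, $A(2,\$)=(A\cup\{\$\})^2\setminus\{(\$,\$)\}$; $(\alpha,\beta)\delta_A^R$ is the word over $A(2,\$)$ obtained by padding the shorter word on the right with $\$$'s and reading letter pairs. For $S$ generated by finite $A$, $\phi:A^+\to S$ canonical, $L\subseteq A^+$ regular with $\phi(L)=S$, write $\alpha=\beta$ if $\phi(\alpha)=\phi(\beta)$,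 and $L_a^\$=\{(\alpha,\beta)\delta^R_A:\alpha,\beta\in L,\alpha a=\beta\}$ for $a\in A\cup\{\varepsilon\}$. $(A,L)$ is an automatic structure if all $L_a^\$$ are regular; $S$ is prefix-automatic if it has an automatic structure $(A,L)$ (for some finite generating set) such that $\{(\alpha,\beta)\delta_A^R:\alpha\in L,\beta\in\mathrm{Pref}(L),\alpha=\beta\}$ is regular, $\mathrm{Pref}(L)$ being the set of prefixes of words of $L$. *)

theory Defs
  imports Main
begin

text \<open>The alphabet a_1,...,a_n is represented by the natural numbers 0,...,n-1
  (a_i corresponds to i-1), well-ordered by the usual order.\<close>

definition alph :: "nat \<Rightarrow> nat set" where
  "alph n = {0..<n}"

definition deglex_less :: "nat list \<Rightarrow> nat list \<Rightarrow> bool" where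
  "deglex_less v w \<longleftrightarrow> (v, w) \<in> lenlex {(a, b). a < (b::nat)}"

definition is_poly :: "nat set \<Rightarrow> (nat list \<Rightarrow> 'k::field) \<Rightarrow> bool" where
  "is_poly A p \<longleftrightarrow> finite {w. p w \<noteq> 0} \<and> {w. p w \<noteq> 0} \<subseteq> lists A"

definition lw :: "(nat list \<Rightarrow> 'k::field) \<Rightarrow> nat list" where
  "lw p = (THE w. p w \<noteq> 0 \<and> (\<forall>v. p v \<noteq> 0 \<longrightarrow> v = w \<or> deglex_less v w))"

definition monic :: "(nat list \<Rightarrow> 'k::field) \<Rightarrow> bool" where
  "monic p \<longleftrightarrow> (\<exists>w. p w \<noteq> 0) \<and> p (lw p) = 1"

definition mmul :: "nat list \<Rightarrow> (nat list \<Rightarrow> 'k::field) \<Rightarrow> nat list \<Rightarrow> (nat list \<Rightarrow> 'k)" where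
  "mmul a p b = (\<lambda>v. if (\<exists>w. v = a @ w @ b)
                      then p (drop (length a) (take (length v - length b) v)) else 0)"

definition binom :: "nat list \<Rightarrow> nat list \<Rightarrow> (nat list \<Rightarrow> 'k::field)" where
  "binom u x = (\<lambda>v. (if v = u then 1 else 0) - (if v = x then 1 else 0))"

definition trivial_mod :: "nat set \<Rightarrow> (nat list \<Rightarrow> 'k::field) set \<Rightarrow> nat list
     \<Rightarrow> (nat list \<Rightarrow> 'k) \<Rightarrow> bool" where
  "trivial_mod A R w h \<longleftrightarrow>
     (\<exists>T c. finite T \<and>
        (\<forall>(a, s, b) \<in> T. a \<in> lists A \<and> b \<in> lists A \<and> s \<in> R \<and> deglex_less (a @ lw s @ b) w) \<and>
        h = (\<lambda>v. \<Sum>t\<in>T. c t * (case t of (a, s, b) \<Rightarrow> mmul a s b v)))"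

definition GS_basis :: "nat set \<Rightarrow> (nat list \<Rightarrow> 'k::field) set \<Rightarrow> bool" where
  "GS_basis A R \<longleftrightarrow>
     (\<forall>f\<in>R. \<forall>g\<in>R.
        (\<forall>a b w. a \<in> lists A \<longrightarrow> b \<in> lists A \<longrightarrow>
           w = lw f @ b \<longrightarrow> w = a @ lw g \<longrightarrow> length (lw f) + length (lw g) > length w \<longrightarrow>
           trivial_mod A R w (\<lambda>v. mmul [] f b v - mmul a g [] v)) \<and>
        (\<forall>a b w. a \<in> lists A \<longrightarrow> b \<in> lists A \<longrightarrow>
           w = lw f \<longrightarrow> w = a @ lw g @ b \<longrightarrow>
           trivial_mod A R w (\<lambda>v. f v - mmul a g b v)))"

text \<open>{u = x} is a Groebner-Shirshov basis iff {u - x} is.\<close>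
definition GS_basis_rel :: "'k::field itself \<Rightarrow> nat set \<Rightarrow> nat list \<Rightarrow> nat list \<Rightarrow> bool" where
  "GS_basis_rel _ A u x \<longleftrightarrow> GS_basis A {binom u x :: nat list \<Rightarrow> 'k}"

definition rstep :: "(nat list \<times> nat list) set \<Rightarrow> (nat list \<times> nat list) set" where
  "rstep R = {(p @ l @ q, p @ r @ q) | p q l r. (l, r) \<in> R}"

definition cong_gen :: "(nat list \<times> nat list) set \<Rightarrow> (nat list \<times> nat list) set" where
  "cong_gen R = (rstep R \<union> (rstep R)\<inverse>)\<^sup>*"

definition regular :: "'c set \<Rightarrow> 'c list set \<Rightarrow> bool" where
  "regular \<Sigma> L \<longleftrightarrow>
     (\<exists>(Q :: nat set) (\<delta> :: nat \<Rightarrow> 'c \<Rightarrow> nat) q0 F.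
        finite Q \<and> q0 \<in> Q \<and> (\<forall>q\<in>Q. \<forall>c\<in>\<Sigma>. \<delta> q c \<in> Q) \<and>
        L = {w \<in> lists \<Sigma>. foldl \<delta> q0 w \<in> F})"

text \<open>A(2,$), with $ represented by None.\<close>
definition pad_alph :: "'c set \<Rightarrow> ('c option \<times> 'c option) set" where
  "pad_alph B = {(p, q). p \<in> Some ` B \<union> {None} \<and> q \<in> Some ` B \<union> {None} \<and> (p, q) \<noteq> (None, None)}"

definition pad :: "'c list \<Rightarrow> 'c list \<Rightarrow> ('c option \<times> 'c option) list" where
  "pad \<alpha> \<beta> = zip (map Some \<alpha> @ replicate (length \<beta> - length \<alpha>) None)
                 (map Some \<beta> @ replicate (length \<alpha> - length \<beta>) None)"

definition Pref :: "'c list set \<Rightarrow> 'c list set" where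
  "Pref L = {p. \<exists>w\<in>L. \<exists>s. w = p @ s}"

text \<open>A finite generating set of S = sgp+<A|R> is an alphabet {0..<m} together with a map
  g assigning to each generator a representative nonempty word over A; the canonical map
  phi sends a generator word beta to the class of concat (map g beta).\<close>

definition eqS :: "(nat list \<times> nat list) set \<Rightarrow> (nat \<Rightarrow> nat list) \<Rightarrow> nat list \<Rightarrow> nat list \<Rightarrow> bool" where
  "eqS R g \<alpha> \<beta> \<longleftrightarrow> \<alpha> \<noteq> [] \<and> \<beta> \<noteq> [] \<and> (concat (map g \<alpha>), concat (map g \<beta>)) \<in> cong_gen R"

definition automatic_structure ::
  "nat set \<Rightarrow> (nat list \<times> nat list) set \<Rightarrow> nat \<Rightarrow> (nat \<Rightarrow> nat list) \<Rightarrow> nat list set \<Rightarrow> bool" where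
  "automatic_structure A R m g L \<longleftrightarrow>
     (\<forall>i<m. g i \<in> lists A \<and> g i \<noteq> []) \<and>
     regular {0..<m} L \<and> L \<subseteq> lists {0..<m} - {[]} \<and>
     (\<forall>w\<in>lists A - {[]}. \<exists>\<alpha>\<in>L. (concat (map g \<alpha>), w) \<in> cong_gen R) \<and>
     (\<forall>a\<in>{[]} \<union> {[i] | i. i < m}.
        regular (pad_alph {0..<m}) {pad \<alpha> \<beta> | \<alpha> \<beta>. \<alpha> \<in> L \<and> \<beta> \<in> L \<and> eqS R g (\<alpha> @ a) \<beta>})"

definition prefix_automatic :: "nat set \<Rightarrow> (nat list \<times> nat list) set \<Rightarrow> bool" where
  "prefix_automatic A R \<longleftrightarrow>
     (\<exists>m g L. automatic_structure A R m g L \<and>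
        regular (pad_alph {0..<m}) {pad \<alpha> \<beta> | \<alpha> \<beta>. \<alpha> \<in> L \<and> \<beta> \<in> Pref L \<and> eqS R g \<alpha> \<beta>})"

end

theory Submission
  imports Defs "HOL-Library.Sublist"
begin

text \<open>Since \<open>|u| \<ge> 2\<close>, the rewriting system \<open>u \<rightarrow> x\<close> is length-reducing. The only compositions
  of \<open>u - x\<close> with itself are overlaps \<open>u q = p u\<close>, and their triviality says that \<open>x q\<close> and
  \<open>p x\<close> are connected by rewriting steps below \<open>u q\<close>; a Newman-type induction along deg-lex
  then gives every word a unique irreducible normal form. The nonempty irreducible words form
  a regular, prefix-closed set of normal forms. For irreducible \<open>\<alpha>\<close> the normal form of
  \<open>\<alpha> a\<^sub>i\<close> is either \<open>\<alpha> a\<^sub>i\<close> itself or, when \<open>a\<^sub>i\<close> is the last letter of \<open>u\<close> and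
  \<open>\<alpha> = d (butlast u)\<^sup>j\<close>, the word \<open>d x\<close> (with \<open>j > 1\<close> only if \<open>x\<close> is the last letter of \<open>u\<close>,
  so that the rewriting cascades). Both shapes of padded pairs are recognised by finite
  automata, and prefix-closure turns the automatic structure into a prefix-automatic one.\<close>

section \<open>Regular languages\<close>

lemma foldl_closed:
  assumes "\<forall>q\<in>Q. \<forall>c\<in>\<Sigma>. \<delta> q c \<in> Q" "q \<in> Q" "w \<in> lists \<Sigma>"
  shows "foldl \<delta> q w \<in> Q"
  using assms(2,3) by (induction w arbitrary: q) (use assms(1) in auto)

text \<open>The finitely many reachable states are renumbered by an initial segment of the naturals,
  the state space required by \<open>regular\<close>.\<close>

lemma regularI_state:
  fixes st :: "'c list \<Rightarrow> 'b"
  assumes fin: "finite (st ` lists \<Sigma>)"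
    and step: "\<And>w c. w \<in> lists \<Sigma> \<Longrightarrow> c \<in> \<Sigma> \<Longrightarrow> st (w @ [c]) = \<delta> (st w) c"
    and accept: "\<And>w. w \<in> lists \<Sigma> \<Longrightarrow> w \<in> L \<longleftrightarrow> P (st w)"
    and sub: "L \<subseteq> lists \<Sigma>"
  shows "regular \<Sigma> L"
proof -
  let ?I = "st ` lists \<Sigma>"
  obtain f :: "'b \<Rightarrow> nat" and N where f: "f ` ?I = {i. i < N}" "inj_on f ?I"
    using finite_imp_inj_to_nat_seg[OF fin] by blast
  define d where "d q c = f (\<delta> (inv_into ?I f q) c)" for q c
  have d_f: "d (f (st w)) c = f (st (w @ [c]))" if "w \<in> lists \<Sigma>" "c \<in> \<Sigma>" for w c
    unfolding d_def using f(2) that step by simp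
  have fold: "foldl d (f (st [])) w = f (st w)" if "w \<in> lists \<Sigma>" for w
    using that by (induction w rule: rev_induct) (auto simp: d_f)
  show ?thesis unfolding regular_def
  proof (intro exI conjI)
    show "finite (f ` ?I)" using fin by simp
    show "f (st []) \<in> f ` ?I" by auto
    show "\<forall>q\<in>f ` ?I. \<forall>c\<in>\<Sigma>. d q c \<in> f ` ?I"
      using d_f by (auto intro!: imageI)
    have "w \<in> L \<longleftrightarrow> foldl d (f (st [])) w \<in> f ` {z \<in> ?I. P z}" if "w \<in> lists \<Sigma>" for w
      unfolding fold[OF that] using that accept f(2) by (auto dest: inj_onD)
    then show "L = {w \<in> lists \<Sigma>. foldl d (f (st [])) w \<in> f ` {z \<in> ?I. P z}}"
      using sub by blast
  qed
qed

lemma regularE: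
  assumes "regular \<Sigma> L"
  obtains Q :: "nat set" and \<delta> :: "nat \<Rightarrow> 'c \<Rightarrow> nat" and q0 F
  where "finite Q" "q0 \<in> Q" "\<forall>q\<in>Q. \<forall>c\<in>\<Sigma>. \<delta> q c \<in> Q" "L = {w \<in> lists \<Sigma>. foldl \<delta> q0 w \<in> F}"
  using assms unfolding regular_def by blast

lemma regular_subset_lists: "regular \<Sigma> L \<Longrightarrow> L \<subseteq> lists \<Sigma>"
  by (auto elim: regularE)

lemma regular_combine:
  assumes "regular \<Sigma> L1" "regular \<Sigma> L2"
  shows "regular \<Sigma> {w \<in> lists \<Sigma>. P (w \<in> L1) (w \<in> L2)}"
proof -
  obtain Q1 :: "nat set" and d1 q1 F1 where A: "finite Q1" "q1 \<in> Q1" "\<forall>q\<in>Q1. \<forall>c\<in>\<Sigma>. d1 q c \<in> Q1"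
    "L1 = {w \<in> lists \<Sigma>. foldl d1 q1 w \<in> F1}" by (rule regularE[OF assms(1)])
  obtain Q2 :: "nat set" and d2 q2 F2 where B: "finite Q2" "q2 \<in> Q2" "\<forall>q\<in>Q2. \<forall>c\<in>\<Sigma>. d2 q c \<in> Q2"
    "L2 = {w \<in> lists \<Sigma>. foldl d2 q2 w \<in> F2}" by (rule regularE[OF assms(2)])
  show ?thesis
  proof (rule regularI_state[where st = "\<lambda>w. (foldl d1 q1 w, foldl d2 q2 w)"
        and \<delta> = "\<lambda>(a, b) c. (d1 a c, d2 b c)" and P = "\<lambda>(a, b). P (a \<in> F1) (b \<in> F2)"])
    have "(\<lambda>w. (foldl d1 q1 w, foldl d2 q2 w)) ` lists \<Sigma> \<subseteq> Q1 \<times> Q2"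
      using A(2,3) B(2,3) foldl_closed[of Q1 \<Sigma> d1 q1] foldl_closed[of Q2 \<Sigma> d2 q2] by blast
    then show "finite ((\<lambda>w. (foldl d1 q1 w, foldl d2 q2 w)) ` lists \<Sigma>)"
      by (rule finite_subset) (use A(1) B(1) in simp)
  qed (use A(4) B(4) in auto)
qed

lemma regular_Int:
  assumes "regular \<Sigma> L1" "regular \<Sigma> L2"
  shows "regular \<Sigma> (L1 \<inter> L2)"
proof -
  have "L1 \<inter> L2 = {w \<in> lists \<Sigma>. w \<in> L1 \<and> w \<in> L2}"
    using regular_subset_lists[OF assms(1)] by blast
  then show ?thesis using regular_combine[OF assms, of "(\<and>)"] by simp
qed

lemma regular_Un:
  assumes "regular \<Sigma> L1" "regular \<Sigma> L2"
  shows "regular \<Sigma> (L1 \<union> L2)"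
proof -
  have "L1 \<union> L2 = {w \<in> lists \<Sigma>. w \<in> L1 \<or> w \<in> L2}"
    using regular_subset_lists[OF assms(1)] regular_subset_lists[OF assms(2)] by blast
  then show ?thesis using regular_combine[OF assms, of "(\<or>)"] by simp
qed

lemma regular_vimage_concat_map:
  assumes "regular \<Sigma> L" "\<forall>c\<in>\<Sigma>'. h c \<in> lists \<Sigma>"
  shows "regular \<Sigma>' {p \<in> lists \<Sigma>'. concat (map h p) \<in> L}"
proof -
  obtain Q :: "nat set" and d q0 F where A: "finite Q" "q0 \<in> Q" "\<forall>q\<in>Q. \<forall>c\<in>\<Sigma>. d q c \<in> Q"
    "L = {w \<in> lists \<Sigma>. foldl d q0 w \<in> F}" by (rule regularE[OF assms(1)])
  have h_lists: "p \<in> lists \<Sigma>' \<Longrightarrow> concat (map h p) \<in> lists \<Sigma>" for p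
    using assms(2) by (induction p) auto
  show ?thesis
  proof (rule regularI_state[where st = "\<lambda>p. foldl d q0 (concat (map h p))"
        and \<delta> = "\<lambda>a c. foldl d a (h c)" and P = "\<lambda>a. a \<in> F"])
    have "(\<lambda>p. foldl d q0 (concat (map h p))) ` lists \<Sigma>' \<subseteq> Q"
      using A(2,3) foldl_closed[of Q \<Sigma> d q0] h_lists by blast
    then show "finite ((\<lambda>p. foldl d q0 (concat (map h p))) ` lists \<Sigma>')"
      by (rule finite_subset) (use A(1) in simp)
  qed (use A(4) h_lists in auto)
qed

lemma regular_empty: "regular \<Sigma> {}"
  by (rule regularI_state[where st = "\<lambda>_. ()" and P = "\<lambda>_. False"]) auto

lemma regular_lists: "D \<subseteq> \<Sigma> \<Longrightarrow> regular \<Sigma> (lists D)"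
  by (rule regularI_state[where st = "\<lambda>w. w \<in> lists D" and \<delta> = "\<lambda>b c. b \<and> c \<in> D" and P = id])
    auto

lemma regular_singleton:
  assumes "v \<in> lists \<Sigma>"
  shows "regular \<Sigma> {v}"
proof (rule regularI_state[where st = "\<lambda>w. if prefix w v then Some w else None"
      and \<delta> = "\<lambda>s c. case s of None \<Rightarrow> None | Some w \<Rightarrow> if prefix (w @ [c]) v then Some (w @ [c]) else None"
      and P = "\<lambda>s. s = Some v"])
  have "(\<lambda>w. if prefix w v then Some w else None) ` lists \<Sigma> \<subseteq> insert None (Some ` set (prefixes v))"
    by auto
  then show "finite ((\<lambda>w. if prefix w v then Some w else None) ` lists \<Sigma>)"
    by (rule finite_subset) simp
qed (use assms in \<open>auto dest: prefix_snocD simp: strict_prefix_def\<close>)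

definition conc :: "'c list set \<Rightarrow> 'c list set \<Rightarrow> 'c list set" where
  "conc L1 L2 = {a @ b | a b. a \<in> L1 \<and> b \<in> L2}"

lemma foldl_suffix_states_snoc:
  "{foldl \<delta> q0 s | q s. p @ [c] = q @ s \<and> q \<in> L} =
    (\<lambda>z. \<delta> z c) ` {foldl \<delta> q0 s | q s. p = q @ s \<and> q \<in> L} \<union> (if p @ [c] \<in> L then {q0} else {})"
proof (intro set_eqI iffI)
  fix z assume "z \<in> {foldl \<delta> q0 s | q s. p @ [c] = q @ s \<and> q \<in> L}"
  then obtain q s where z: "z = foldl \<delta> q0 s" and e: "p @ [c] = q @ s" and q: "q \<in> L" by blast
  show "z \<in> (\<lambda>z. \<delta> z c) ` {foldl \<delta> q0 s | q s. p = q @ s \<and> q \<in> L} \<union> (if p @ [c] \<in> L then {q0} else {})"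
  proof (cases s rule: rev_cases)
    case Nil then show ?thesis using z e q by simp
  next
    case (snoc s' c')
    then have "c' = c" "p = q @ s'" using e by auto
    then show ?thesis using z snoc q by auto
  qed
next
  fix z assume "z \<in> (\<lambda>z. \<delta> z c) ` {foldl \<delta> q0 s | q s. p = q @ s \<and> q \<in> L} \<union> (if p @ [c] \<in> L then {q0} else {})"
  then consider q s where "z = foldl \<delta> q0 (s @ [c])" "p @ [c] = q @ (s @ [c])" "q \<in> L"
    | "z = foldl \<delta> q0 []" "p @ [c] = (p @ [c]) @ []" "p @ [c] \<in> L"
    by (auto split: if_splits)
  then show "z \<in> {foldl \<delta> q0 s | q s. p @ [c] = q @ s \<and> q \<in> L}" by cases blast+
qed

text \<open>For the concatenation \<open>L1 L2\<close> the automaton tracks the run on \<open>L1\<close> together with the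
  set of states reached by runs of the automaton of \<open>L2\<close> started at every split point
  where the prefix lies in \<open>L1\<close>.\<close>

lemma regular_conc:
  assumes "regular \<Sigma> L1" "regular \<Sigma> L2"
  shows "regular \<Sigma> (conc L1 L2)"
proof -
  obtain Q1 :: "nat set" and d1 q1 F1 where A: "finite Q1" "q1 \<in> Q1" "\<forall>q\<in>Q1. \<forall>c\<in>\<Sigma>. d1 q c \<in> Q1"
    "L1 = {w \<in> lists \<Sigma>. foldl d1 q1 w \<in> F1}" by (rule regularE[OF assms(1)])
  obtain Q2 :: "nat set" and d2 q2 F2 where B: "finite Q2" "q2 \<in> Q2" "\<forall>q\<in>Q2. \<forall>c\<in>\<Sigma>. d2 q c \<in> Q2"
    "L2 = {w \<in> lists \<Sigma>. foldl d2 q2 w \<in> F2}" by (rule regularE[OF assms(2)])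
  define S where "S p = {foldl d2 q2 s | q s. p = q @ s \<and> q \<in> L1}" for p
  have S_sub: "S p \<subseteq> Q2" if "p \<in> lists \<Sigma>" for p
    using that unfolding S_def by (auto intro!: foldl_closed[OF B(3,2)])
  show ?thesis
  proof (rule regularI_state[where st = "\<lambda>p. (foldl d1 q1 p, S p)"
        and \<delta> = "\<lambda>(a, Z) c. (d1 a c, (\<lambda>z. d2 z c) ` Z \<union> (if d1 a c \<in> F1 then {q2} else {}))"
        and P = "\<lambda>(a, Z). Z \<inter> F2 \<noteq> {}"])
    have "(\<lambda>p. (foldl d1 q1 p, S p)) ` lists \<Sigma> \<subseteq> Q1 \<times> Pow Q2"
      using A(2,3) foldl_closed[of Q1 \<Sigma> d1 q1] S_sub by blast
    then show "finite ((\<lambda>p. (foldl d1 q1 p, S p)) ` lists \<Sigma>)"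
      by (rule finite_subset) (use A(1) B(1) in simp)
  next
    fix w c assume "w \<in> lists \<Sigma>" "c \<in> \<Sigma>"
    then show "(foldl d1 q1 (w @ [c]), S (w @ [c])) =
      (\<lambda>(a, Z) c. (d1 a c, (\<lambda>z. d2 z c) ` Z \<union> (if d1 a c \<in> F1 then {q2} else {}))) (foldl d1 q1 w, S w) c"
      using foldl_suffix_states_snoc[of d2 q2 w c L1] A(4) unfolding S_def by simp
  next
    fix w assume w: "w \<in> lists \<Sigma>"
    have "w \<in> conc L1 L2 \<longleftrightarrow> S w \<inter> F2 \<noteq> {}"
      unfolding S_def conc_def using B(4) w by fastforce
    then show "w \<in> conc L1 L2 \<longleftrightarrow> (case (foldl d1 q1 w, S w) of (a, Z) \<Rightarrow> Z \<inter> F2 \<noteq> {})"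
      by simp
  next
    show "conc L1 L2 \<subseteq> lists \<Sigma>" unfolding conc_def using A(4) B(4) by auto
  qed
qed

lemma all_nth_snoc_iff:
  "(\<forall>i<length (p @ [c]). (p @ [c]) ! i = f i) \<longleftrightarrow> (\<forall>i<length p. p ! i = f i) \<and> c = f (length p)"
  by (auto simp: nth_append less_Suc_eq)

lemma nth_concat_replicate:
  "i < length (concat (replicate m v)) \<Longrightarrow> concat (replicate m v) ! i = v ! (i mod length v)"
proof (induction m arbitrary: i)
  case (Suc m)
  show ?case
  proof (cases "i < length v")
    case False
    then have "(i - length v) mod length v = i mod length v"
      using le_mod_geq[of "length v" i] by simp
    then show ?thesis using Suc False by (simp add: nth_append)
  qed (simp add: nth_append)
qed simp

lemma concat_replicate_iff_periodic:
  assumes "v \<noteq> []"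
  shows "(\<exists>m. p = concat (replicate m v)) \<longleftrightarrow>
    length p mod length v = 0 \<and> (\<forall>i<length p. p ! i = v ! (i mod length v))"
proof
  assume "\<exists>m. p = concat (replicate m v)"
  then obtain m where p: "p = concat (replicate m v)" by blast
  have "\<forall>i<length p. p ! i = v ! (i mod length v)" unfolding p using nth_concat_replicate by blast
  then show "length p mod length v = 0 \<and> (\<forall>i<length p. p ! i = v ! (i mod length v))"
    using p by (simp add: length_concat sum_list_replicate)
next
  assume "length p mod length v = 0 \<and> (\<forall>i<length p. p ! i = v ! (i mod length v))"
  then show "\<exists>m. p = concat (replicate m v)"
  proof (induction p rule: measure_induct_rule[where f = length])
    case (less p)
    show ?case
    proof (cases "p = []")
      case True
      then have "p = concat (replicate 0 v)" by simp
      then show ?thesis by blast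
    next
      case False
      let ?K = "length v"
      from less.prems have per: "length p mod ?K = 0" "\<And>i. i < length p \<Longrightarrow> p ! i = v ! (i mod ?K)"
        by auto
      have long: "?K \<le> length p"
      proof (rule ccontr)
        assume "\<not> ?K \<le> length p"
        then have "length p mod ?K = length p" by simp
        then show False using per(1) False by simp
      qed
      have head: "take ?K p = v"
      proof (rule nth_equalityI)
        fix i assume "i < length (take ?K p)"
        then show "take ?K p ! i = v ! i" using per(2)[of i] by simp
      qed (use long in simp)
      have "\<exists>m. drop ?K p = concat (replicate m v)"
      proof (rule less.IH)
        show "length (drop ?K p) < length p" using False assms by simp
        show "length (drop ?K p) mod ?K = 0 \<and> (\<forall>i<length (drop ?K p). drop ?K p ! i = v ! (i mod ?K))"
          using le_mod_geq[OF long] per long by simp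
      qed
      then obtain m where "drop ?K p = concat (replicate m v)" by blast
      then have "p = concat (replicate (Suc m) v)"
        using head append_take_drop_id[of ?K p] by simp
      then show ?thesis by blast
    qed
  qed
qed

lemma regular_powers:
  assumes "v \<in> lists \<Sigma>"
  shows "regular \<Sigma> (range (\<lambda>m. concat (replicate m v)))"
proof (cases "v = []")
  case True
  then have "range (\<lambda>m. concat (replicate m v)) = {[]}" by auto
  then show ?thesis using regular_singleton[of "[]" \<Sigma>] by simp
next
  case False
  let ?K = "length v"
  define st where "st p = ((\<forall>i<length p. p ! i = v ! (i mod ?K)), length p mod ?K)" for p
  show ?thesis
  proof (rule regularI_state[where st = st
        and \<delta> = "\<lambda>(ok, r) c. (ok \<and> c = v ! r, Suc r mod ?K)" and P = "\<lambda>(ok, r). ok \<and> r = 0"])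
    have "st ` lists \<Sigma> \<subseteq> UNIV \<times> {..<?K}"
      using False unfolding st_def by auto
    then show "finite (st ` lists \<Sigma>)"
      by (rule finite_subset) simp
  next
    fix w c
    show "st (w @ [c]) = (\<lambda>(ok, r) c. (ok \<and> c = v ! r, Suc r mod ?K)) (st w) c"
      unfolding st_def all_nth_snoc_iff by (simp add: mod_Suc_eq)
  next
    fix w
    show "w \<in> range (\<lambda>m. concat (replicate m v)) \<longleftrightarrow> (case st w of (ok, r) \<Rightarrow> ok \<and> r = 0)"
      using concat_replicate_iff_periodic[OF False, of w] unfolding st_def by auto
  next
    have "concat (replicate m v) \<in> lists \<Sigma>" for m
      using assms by (induction m) auto
    then show "range (\<lambda>m. concat (replicate m v)) \<subseteq> lists \<Sigma>" by blast
  qed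
qed

section \<open>Padded pairs of words\<close>

lemma pad_Cons [simp]: "pad (a # \<alpha>) (b # \<beta>) = (Some a, Some b) # pad \<alpha> \<beta>"
  unfolding pad_def by simp

lemma pad_Nil_left [simp]: "pad [] \<beta> = map (\<lambda>b. (None, Some b)) \<beta>"
  unfolding pad_def by (induction \<beta>) auto

lemma pad_Nil_right [simp]: "pad \<alpha> [] = map (\<lambda>a. (Some a, None)) \<alpha>"
  unfolding pad_def by (induction \<alpha>) auto

lemma map_filter_fst_pad [simp]: "List.map_filter fst (pad \<alpha> \<beta>) = \<alpha>"
proof -
  have aux: "List.map_filter fst (map (\<lambda>a. (Some a, None :: 'a option)) xs) = xs"
    "List.map_filter fst (map (\<lambda>b. (None :: 'a option, Some b)) xs) = []" for xs :: "'a list"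
    by (induction xs) simp_all
  show ?thesis by (induction \<alpha> \<beta> rule: list_induct2') (simp_all add: aux)
qed

lemma map_filter_snd_pad [simp]: "List.map_filter snd (pad \<alpha> \<beta>) = \<beta>"
proof -
  have aux: "List.map_filter snd (map (\<lambda>a. (Some a, None :: 'a option)) xs) = []"
    "List.map_filter snd (map (\<lambda>b. (None :: 'a option, Some b)) xs) = xs" for xs :: "'a list"
    by (induction xs) simp_all
  show ?thesis by (induction \<alpha> \<beta> rule: list_induct2') (simp_all add: aux)
qed

lemma pad_in_lists: "\<alpha> \<in> lists \<Sigma> \<Longrightarrow> \<beta> \<in> lists \<Sigma> \<Longrightarrow> pad \<alpha> \<beta> \<in> lists (pad_alph \<Sigma>)"
  by (induction \<alpha> \<beta> rule: list_induct2') (auto simp: pad_alph_def)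

lemma pad_append_same: "pad (d @ \<alpha>) (d @ \<beta>) = pad d d @ pad \<alpha> \<beta>"
  by (induction d) simp_all

lemma pad_append_left:
  "length \<beta> \<le> length b \<Longrightarrow> pad (b @ w) \<beta> = pad b \<beta> @ map (\<lambda>c. (Some c, None)) w"
  by (induction b \<beta> rule: list_induct2') simp_all

lemma lists_diagonal_iff:
  "p \<in> lists ((\<lambda>c. (Some c, Some c)) ` \<Sigma>) \<longleftrightarrow> (\<exists>d\<in>lists \<Sigma>. p = pad d d)"
proof
  show "p \<in> lists ((\<lambda>c. (Some c, Some c)) ` \<Sigma>) \<Longrightarrow> \<exists>d\<in>lists \<Sigma>. p = pad d d"
  proof (induction p)
    case (Cons a p)
    then obtain c d where "a = (Some c, Some c)" "c \<in> \<Sigma>" "d \<in> lists \<Sigma>" "p = pad d d" by auto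
    then show ?case by (intro bexI[of _ "c # d"]) simp_all
  qed (auto intro: bexI[of _ "[]"])
  show "\<exists>d\<in>lists \<Sigma>. p = pad d d \<Longrightarrow> p \<in> lists ((\<lambda>c. (Some c, Some c)) ` \<Sigma>)"
  proof (elim bexE)
    fix d assume "d \<in> lists \<Sigma>" "p = pad d d"
    then show ?thesis by (induction d arbitrary: p) auto
  qed
qed

lemma regular_vimage_map_filter:
  assumes "regular \<Sigma> L" "\<forall>c\<in>\<Sigma>'. set_option (f c) \<subseteq> \<Sigma>"
  shows "regular \<Sigma>' {p \<in> lists \<Sigma>'. List.map_filter f p \<in> L}"
proof -
  let ?h = "\<lambda>c. case f c of None \<Rightarrow> [] | Some a \<Rightarrow> [a]"
  have "List.map_filter f p = concat (map ?h p)" for p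
    by (induction p) (simp_all split: option.split)
  moreover have "\<forall>c\<in>\<Sigma>'. ?h c \<in> lists \<Sigma>"
    using assms(2) by (auto split: option.split)
  ultimately show ?thesis using regular_vimage_concat_map[OF assms(1)] by simp
qed

definition tracks_in :: "'c set \<Rightarrow> 'c list set \<Rightarrow> 'c list set \<Rightarrow> ('c option \<times> 'c option) list set" where
  "tracks_in \<Sigma> L1 L2 =
     {p \<in> lists (pad_alph \<Sigma>). List.map_filter fst p \<in> L1 \<and> List.map_filter snd p \<in> L2}"

lemma regular_tracks_in:
  assumes "regular \<Sigma> L1" "regular \<Sigma> L2"
  shows "regular (pad_alph \<Sigma>) (tracks_in \<Sigma> L1 L2)"
proof -
  have "\<forall>c\<in>pad_alph \<Sigma>. set_option (fst c) \<subseteq> \<Sigma>" "\<forall>c\<in>pad_alph \<Sigma>. set_option (snd c) \<subseteq> \<Sigma>"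
    unfolding pad_alph_def by auto
  then have "regular (pad_alph \<Sigma>) {p \<in> lists (pad_alph \<Sigma>). List.map_filter fst p \<in> L1}"
    "regular (pad_alph \<Sigma>) {p \<in> lists (pad_alph \<Sigma>). List.map_filter snd p \<in> L2}"
    using regular_vimage_map_filter assms by blast+
  from regular_Int[OF this] show ?thesis
    unfolding tracks_in_def by (simp add: Collect_conj_eq Int_assoc Int_absorb Int_left_commute)
qed

lemma pad_in_tracks_in_iff:
  assumes "L1 \<subseteq> lists \<Sigma>" "L2 \<subseteq> lists \<Sigma>"
  shows "pad \<alpha> \<beta> \<in> tracks_in \<Sigma> L1 L2 \<longleftrightarrow> \<alpha> \<in> L1 \<and> \<beta> \<in> L2"
proof -
  have "\<alpha> \<in> L1 \<Longrightarrow> \<beta> \<in> L2 \<Longrightarrow> pad \<alpha> \<beta> \<in> lists (pad_alph \<Sigma>)"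
    using assms by (intro pad_in_lists) auto
  then show ?thesis unfolding tracks_in_def by auto
qed

section \<open>Rewriting with \<open>u \<rightarrow> x\<close>\<close>

abbreviation red :: "nat list \<Rightarrow> nat \<Rightarrow> (nat list \<times> nat list) set" where
  "red u x \<equiv> rstep {(u, [x])}"

lemma red_iff: "(a, b) \<in> red u x \<longleftrightarrow> (\<exists>p q. a = p @ u @ q \<and> b = p @ [x] @ q)"
  unfolding rstep_def by blast

lemma red_length_less: "(a, b) \<in> red u x \<Longrightarrow> 2 \<le> length u \<Longrightarrow> length b < length a"
  unfolding red_iff by auto

lemma red_context: "(a, b) \<in> red u x \<Longrightarrow> (p @ a @ q, p @ b @ q) \<in> red u x"
  unfolding red_iff by (metis append.assoc)

lemma irreducible_iff: "\<not> sublist u v \<longleftrightarrow> (\<forall>b. (v, b) \<notin> red u x)"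
  unfolding sublist_def red_iff by blast

lemma rtrancl_red_imp_cong_gen: "(a, b) \<in> (red u x)\<^sup>* \<Longrightarrow> (a, b) \<in> cong_gen {(u, [x])}"
  unfolding cong_gen_def by (rule rtrancl_mono[THEN subsetD, rotated]) auto

lemma rtrancl_red_lists:
  assumes "(a, b) \<in> (red u x)\<^sup>*" "a \<in> lists \<Sigma>" "x \<in> \<Sigma>"
  shows "b \<in> lists \<Sigma>"
  using assms(1,2) by induction (use assms(3) in \<open>auto simp: red_iff\<close>)

lemma rtrancl_red_nonempty:
  assumes "(a, b) \<in> (red u x)\<^sup>*" "a \<noteq> []"
  shows "b \<noteq> []"
  using assms by induction (auto simp: red_iff)

lemma cong_gen_sym: "(a, b) \<in> cong_gen R \<Longrightarrow> (b, a) \<in> cong_gen R"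
  unfolding cong_gen_def by (metis converse_Un converse_converse rtrancl_converseI sup_commute)

lemma deglex_less_if_shorter: "length v < length w \<Longrightarrow> deglex_less v w"
  unfolding deglex_less_def lenlex_conv by simp

lemma deglex_less_length_le: "deglex_less v w \<Longrightarrow> length v \<le> length w"
  unfolding deglex_less_def lenlex_conv by auto

lemma deglex_less_context: "deglex_less v w \<Longrightarrow> deglex_less (p @ v @ q) (p @ w @ q)"
  unfolding deglex_less_def lenlex_conv by (auto intro: lex_append_leftI lex_append_rightI)

text \<open>A composition that is trivial modulo \<open>(R, w)\<close> connects its two words by these steps
  (lemma \<open>trivial_mod_imp_conv_below\<close>); this is the form in which the Groebner-Shirshov
  condition enters the confluence argument.\<close>

definition conv_below :: "nat list \<Rightarrow> nat \<Rightarrow> nat list \<Rightarrow> (nat list \<times> nat list) set" where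
  "conv_below u x w =
     {(a, b). ((a, b) \<in> red u x \<or> (b, a) \<in> red u x) \<and> deglex_less a w \<and> deglex_less b w}"

lemma conv_below_sym: "sym (conv_below u x w)"
  unfolding conv_below_def sym_def by auto

lemma red_conv_below:
  assumes "2 \<le> length u" "deglex_less (a @ u @ b) w"
  shows "(a @ u @ b, a @ [x] @ b) \<in> conv_below u x w"
proof -
  have "deglex_less (a @ [x] @ b) w"
    using deglex_less_length_le[OF assms(2)] assms(1) by (auto intro!: deglex_less_if_shorter)
  moreover have "(a @ u @ b, a @ [x] @ b) \<in> red u x" unfolding red_iff by blast
  ultimately show ?thesis using assms(2) unfolding conv_below_def by blast
qed

lemma rtrancl_conv_below_sym: "(a, b) \<in> (conv_below u x w)\<^sup>* \<Longrightarrow> (b, a) \<in> (conv_below u x w)\<^sup>*"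
  using sym_rtrancl[OF conv_below_sym] unfolding sym_def by blast

lemma rtrancl_conv_below_context:
  "(a, b) \<in> (conv_below u x w)\<^sup>* \<Longrightarrow> (p @ a @ q, p @ b @ q) \<in> (conv_below u x (p @ w @ q))\<^sup>*"
proof (induction rule: rtrancl_induct)
  case (step y z)
  have "(p @ y @ q, p @ z @ q) \<in> conv_below u x (p @ w @ q)"
    using step(2) unfolding conv_below_def by (auto intro: red_context deglex_less_context)
  then show ?case by (rule rtrancl_into_rtrancl[OF step(3)])
qed simp

definition overlaps_resolved :: "nat list \<Rightarrow> nat \<Rightarrow> bool" where
  "overlaps_resolved u x \<longleftrightarrow>
     (\<forall>p q. u @ q = p @ u \<longrightarrow> 0 < length p \<longrightarrow> length p < length u \<longrightarrow>
        (x # q, p @ [x]) \<in> (conv_below u x (u @ q))\<^sup>*)"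

definition normal_forms :: "nat list \<Rightarrow> nat \<Rightarrow> nat list \<Rightarrow> nat list set" where
  "normal_forms u x v = {n. (v, n) \<in> (red u x)\<^sup>* \<and> \<not> sublist u n}"

definition unique_normal_form :: "nat list \<Rightarrow> nat \<Rightarrow> nat list \<Rightarrow> bool" where
  "unique_normal_form u x v \<longleftrightarrow> (\<forall>n1\<in>normal_forms u x v. \<forall>n2\<in>normal_forms u x v. n1 = n2)"

lemma normal_forms_nonempty:
  assumes "2 \<le> length u"
  shows "normal_forms u x v \<noteq> {}"
proof (induction v rule: measure_induct_rule[where f = length])
  case (less v)
  show ?case
  proof (cases "sublist u v")
    case False then show ?thesis unfolding normal_forms_def by blast
  next
    case True
    then obtain b where b: "(v, b) \<in> red u x" using irreducible_iff by blast
    then obtain n where "n \<in> normal_forms u x b"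
      using less red_length_less[OF b assms] by blast
    then have "n \<in> normal_forms u x v"
      unfolding normal_forms_def using b by (blast intro: converse_rtrancl_into_rtrancl)
    then show ?thesis by blast
  qed
qed

lemma normal_forms_step:
  assumes "(a, b) \<in> red u x" "unique_normal_form u x a" "2 \<le> length u"
  shows "normal_forms u x b = normal_forms u x a"
proof -
  have sub: "normal_forms u x b \<subseteq> normal_forms u x a"
    using assms(1) unfolding normal_forms_def by (blast intro: converse_rtrancl_into_rtrancl)
  obtain n where n: "n \<in> normal_forms u x b" using normal_forms_nonempty[OF assms(3)] by blast
  have "m = n" if "m \<in> normal_forms u x a" for m
    using assms(2) sub n that unfolding unique_normal_form_def by blast
  then show ?thesis using sub n by blast
qed

lemma normal_forms_conv_below:
  assumes "(a, b) \<in> (conv_below u x w)\<^sup>*" "\<And>z. deglex_less z w \<Longrightarrow> unique_normal_form u x z"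
    "2 \<le> length u"
  shows "normal_forms u x a = normal_forms u x b"
  using assms(1)
proof (induction rule: rtrancl_induct)
  case (step y z)
  then have "(y, z) \<in> red u x \<or> (z, y) \<in> red u x" "deglex_less y w" "deglex_less z w"
    unfolding conv_below_def by auto
  then have "normal_forms u x y = normal_forms u x z"
    using normal_forms_step assms(2,3) by metis
  then show ?case using step(3) by simp
qed simp

lemma append_eq_append_shorter:
  assumes "xs @ ys = zs @ ts" "length xs \<le> length zs"
  obtains us where "zs = xs @ us" "ys = us @ ts"
proof -
  have "xs = take (length xs) zs \<and> ys = drop (length xs) zs @ ts"
    using assms by (simp add: append_eq_append_conv_if)
  then show ?thesis using that by (metis append_take_drop_id)
qed

text \<open>Two one-step reducts of the same word are connected below it: disjoint occurrences of
  \<open>u\<close> commute, and overlapping ones are the resolved overlaps, shifted into context.\<close>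

lemma critical_peak:
  assumes "2 \<le> length u" "overlaps_resolved u x"
    and eq: "P1 @ u @ Q1 = P2 @ u @ Q2" and le: "length P1 \<le> length P2"
  shows "(P1 @ [x] @ Q1, P2 @ [x] @ Q2) \<in> (conv_below u x (P1 @ u @ Q1))\<^sup>*"
proof -
  obtain d where d: "P2 = P1 @ d" "u @ Q1 = d @ u @ Q2"
    using append_eq_append_shorter[OF eq le] by blast
  consider "d = []" | "0 < length d" "length d < length u" | "length u \<le> length d"
    by fastforce
  then show ?thesis
  proof cases
    case 1 then show ?thesis using d by simp
  next
    case 2
    then obtain q where q: "d @ u = u @ q" "Q1 = q @ Q2"
      using append_eq_append_shorter[of u Q1 "d @ u" Q2] d(2) by auto
    have "(x # q, d @ [x]) \<in> (conv_below u x (u @ q))\<^sup>*"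
      using assms(2) q(1)[symmetric] 2 unfolding overlaps_resolved_def by blast
    from rtrancl_conv_below_context[OF this, of P1 Q2]
    show ?thesis using q d by simp
  next
    case 3
    then obtain M where M: "d = u @ M" "Q1 = M @ u @ Q2"
      using append_eq_append_shorter[of u Q1 d "u @ Q2"] d(2) 3 by auto
    let ?w = "P1 @ u @ Q1" and ?z = "P1 @ [x] @ M @ [x] @ Q2"
    have "(P1 @ [x] @ M @ u @ Q2, ?z) \<in> red u x"
      unfolding red_iff by (rule exI[of _ "P1 @ [x] @ M"], rule exI[of _ Q2]) simp
    moreover have "(P1 @ u @ M @ [x] @ Q2, ?z) \<in> red u x"
      unfolding red_iff by (rule exI[of _ P1], rule exI[of _ "M @ [x] @ Q2"]) simp
    moreover have "deglex_less (P1 @ [x] @ M @ u @ Q2) ?w" "deglex_less (P1 @ u @ M @ [x] @ Q2) ?w"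
      "deglex_less ?z ?w"
      using assms(1) M by (auto intro!: deglex_less_if_shorter)
    ultimately have "(P1 @ [x] @ M @ u @ Q2, ?z) \<in> conv_below u x ?w"
      "(?z, P1 @ u @ M @ [x] @ Q2) \<in> conv_below u x ?w"
      unfolding conv_below_def by auto
    then have "(P1 @ [x] @ M @ u @ Q2, P1 @ u @ M @ [x] @ Q2) \<in> (conv_below u x ?w)\<^sup>*"
      by (meson r_into_rtrancl rtrancl_into_rtrancl)
    then show ?thesis using M d by simp
  qed
qed

lemma reducts_conv_below:
  assumes "2 \<le> length u" "overlaps_resolved u x" "(w, v1) \<in> red u x" "(w, v2) \<in> red u x"
  shows "(v1, v2) \<in> (conv_below u x w)\<^sup>*"
proof -
  obtain P1 Q1 P2 Q2 where pq: "w = P1 @ u @ Q1" "v1 = P1 @ [x] @ Q1" "w = P2 @ u @ Q2" "v2 = P2 @ [x] @ Q2"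
    using assms(3,4) red_iff by metis
  show ?thesis
  proof (cases "length P1 \<le> length P2")
    case True
    then show ?thesis using critical_peak[OF assms(1,2), of P1 Q1 P2 Q2] pq by simp
  next
    case False
    then show ?thesis
      using critical_peak[OF assms(1,2), of P2 Q2 P1 Q1] pq rtrancl_conv_below_sym by simp
  qed
qed

lemma unique_normal_forms:
  assumes "2 \<le> length u" "overlaps_resolved u x"
  shows "unique_normal_form u x w"
proof (induction w rule: wf_induct_rule[OF wf_lenlex[OF wf_less]])
  case (1 w)
  have IH: "\<And>z. deglex_less z w \<Longrightarrow> unique_normal_form u x z"
    using 1 unfolding deglex_less_def by blast
  show ?case unfolding unique_normal_form_def
  proof (intro ballI)
    fix n1 n2 assume n1: "n1 \<in> normal_forms u x w" and n2: "n2 \<in> normal_forms u x w"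
    show "n1 = n2"
    proof (cases "sublist u w")
      case False
      then have "n = w" if "n \<in> normal_forms u x w" for n
        using that irreducible_iff[of u w x] unfolding normal_forms_def
        by (auto elim: converse_rtranclE)
      then show ?thesis using n1 n2 by metis
    next
      case True
      have first_step: "\<exists>v. (w, v) \<in> red u x \<and> n \<in> normal_forms u x v" if "n \<in> normal_forms u x w" for n
        using that True unfolding normal_forms_def by (auto elim: converse_rtranclE)
      obtain v1 where v1: "(w, v1) \<in> red u x" "n1 \<in> normal_forms u x v1" using first_step[OF n1] by blast
      obtain v2 where v2: "(w, v2) \<in> red u x" "n2 \<in> normal_forms u x v2" using first_step[OF n2] by blast
      have "(v1, v2) \<in> (conv_below u x w)\<^sup>*" by (rule reducts_conv_below[OF assms v1(1) v2(1)])
      then have "normal_forms u x v1 = normal_forms u x v2"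
        using normal_forms_conv_below IH assms(1) by blast
      moreover have "deglex_less v1 w"
        using red_length_less[OF v1(1) assms(1)] by (rule deglex_less_if_shorter)
      ultimately show ?thesis using IH v1(2) v2(2) unfolding unique_normal_form_def by blast
    qed
  qed
qed

lemma cong_gen_normal_forms:
  assumes "2 \<le> length u" "overlaps_resolved u x" "(a, b) \<in> cong_gen {(u, [x])}"
  shows "normal_forms u x a = normal_forms u x b"
proof -
  have "(a, b) \<in> (red u x \<union> (red u x)\<inverse>)\<^sup>*" using assms(3) unfolding cong_gen_def .
  then show ?thesis
  proof (induction rule: rtrancl_induct)
    case (step y z)
    then have "normal_forms u x y = normal_forms u x z"
      using normal_forms_step unique_normal_forms[OF assms(1,2)] assms(1) by blast
    then show ?case using step(3) by simp
  qed simp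
qed

lemma normal_forms_irreducible:
  assumes "2 \<le> length u" "overlaps_resolved u x" "\<not> sublist u v"
  shows "normal_forms u x v = {v}"
  using unique_normal_forms[OF assms(1,2), of v] assms(3)
  unfolding unique_normal_form_def normal_forms_def by blast

lemma cong_gen_imp_red_irreducible:
  assumes "2 \<le> length u" "overlaps_resolved u x" "(a, b) \<in> cong_gen {(u, [x])}" "\<not> sublist u b"
  shows "(a, b) \<in> (red u x)\<^sup>*"
  using cong_gen_normal_forms[OF assms(1-3)] normal_forms_irreducible[OF assms(1,2,4)]
  unfolding normal_forms_def by blast

lemma cong_gen_irreducible_eq:
  assumes "2 \<le> length u" "overlaps_resolved u x" "(a, b) \<in> cong_gen {(u, [x])}"
    "\<not> sublist u a" "\<not> sublist u b"
  shows "a = b"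
  using cong_gen_normal_forms[OF assms(1-3)] normal_forms_irreducible[OF assms(1,2)] assms(4,5)
  by simp

section \<open>Compositions of \<open>u - x\<close>\<close>

lemma mmul_binom:
  "mmul a (binom u y :: nat list \<Rightarrow> 'k::field) b v =
     (if v = a @ u @ b then 1 else 0) - (if v = a @ y @ b then 1 else 0)"
proof (cases "\<exists>w. v = a @ w @ b")
  case True
  then obtain w where "v = a @ w @ b" by blast
  then show ?thesis unfolding mmul_def binom_def by simp
next
  case False
  then show ?thesis unfolding mmul_def by auto
qed

lemma lw_binom:
  assumes "2 \<le> length u"
  shows "lw (binom u [x] :: nat list \<Rightarrow> 'k::field) = u"
proof -
  have "u \<noteq> [x]" using assms by auto
  then have supp: "(binom u [x] v :: 'k) \<noteq> 0 \<longleftrightarrow> v = u \<or> v = [x]" for v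
    unfolding binom_def by auto
  show ?thesis unfolding lw_def
  proof (rule the_equality)
    have "deglex_less [x] u" using assms by (intro deglex_less_if_shorter) simp
    then show "(binom u [x] u :: 'k) \<noteq> 0 \<and> (\<forall>v. (binom u [x] v :: 'k) \<noteq> 0 \<longrightarrow> v = u \<or> deglex_less v u)"
      using supp by blast
  next
    fix w assume w: "(binom u [x] w :: 'k) \<noteq> 0 \<and> (\<forall>v. (binom u [x] v :: 'k) \<noteq> 0 \<longrightarrow> v = w \<or> deglex_less v w)"
    then have "w = u \<or> w = [x]" "u = w \<or> deglex_less u w" using supp by blast+
    then show "w = u" using assms deglex_less_length_le by fastforce
  qed
qed

lemma sum_mult_indicator:
  assumes "finite V" "z \<in> V"
  shows "(\<Sum>v\<in>V. g v * (if v = z then 1 else 0)) = (g z :: 'k::field)"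
proof -
  have "(\<Sum>v\<in>V. g v * (if v = z then 1 else 0)) = (\<Sum>v\<in>V. if v = z then g v else 0)"
    by (rule sum.cong) auto
  also have "\<dots> = g z" using assms by simp
  finally show ?thesis .
qed

text \<open>If \<open>y - z\<close> is trivial modulo \<open>(u - x, w)\<close> then \<open>z\<close> and \<open>y\<close> are connected below \<open>w\<close>:
  the linear functional given by the indicator of the connected component of \<open>z\<close> vanishes on
  every \<open>a (u - x) b\<close> with \<open>a u b < w\<close>, hence on \<open>y - z\<close>.\<close>

lemma trivial_mod_imp_conv_below:
  fixes y z :: "nat list"
  assumes "2 \<le> length u"
    and triv: "trivial_mod A {binom u [x] :: nat list \<Rightarrow> 'k::field} w
                 (\<lambda>v. (if v = y then 1 else 0) - (if v = z then 1 else 0))"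
  shows "(z, y) \<in> (conv_below u x w)\<^sup>*"
proof -
  let ?f = "binom u [x] :: nat list \<Rightarrow> 'k"
  let ?m = "\<lambda>t v. case t of (a, s, b) \<Rightarrow> mmul a s b v"
  obtain T c where T: "finite T"
    "\<forall>(a, s, b) \<in> T. a \<in> lists A \<and> b \<in> lists A \<and> s \<in> {?f} \<and> deglex_less (a @ lw s @ b) w"
    and h: "(\<lambda>v. (if v = y then 1 else 0) - (if v = z then 1 else 0)) = (\<lambda>v. \<Sum>t\<in>T. c t * ?m t v)"
    using triv unfolding trivial_mod_def by blast
  have lw_f: "lw ?f = u" by (rule lw_binom[OF assms(1)])
  have T_form: "\<exists>a b. t = (a, ?f, b) \<and> deglex_less (a @ u @ b) w" if "t \<in> T" for t
    using T(2) that lw_f by fastforce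
  define \<chi> where "\<chi> v = (if (z, v) \<in> (conv_below u x w)\<^sup>* then 1 else 0 :: 'k)" for v
  define V where "V = {y, z} \<union> (\<lambda>(a, s, b). a @ u @ b) ` T \<union> (\<lambda>(a, s, b). a @ [x] @ b) ` T"
  have V: "finite V" using T(1) unfolding V_def by simp
  have \<chi>_step: "\<chi> (a @ u @ b) = \<chi> (a @ [x] @ b)" if "deglex_less (a @ u @ b) w" for a b
    using red_conv_below[OF assms(1) that, of x] conv_below_sym unfolding \<chi>_def sym_def
    by (metis rtrancl.rtrancl_into_rtrancl)
  have \<chi>_term: "(\<Sum>v\<in>V. \<chi> v * ?m t v) = 0" if tT: "t \<in> T" for t
  proof -
    obtain a b where t: "t = (a, ?f, b)" "deglex_less (a @ u @ b) w" using T_form[OF tT] by blast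
    then have "a @ u @ b \<in> V" "a @ [x] @ b \<in> V" unfolding V_def using tT by force+
    then show ?thesis
      using \<chi>_step[OF t(2)] V
      by (simp add: t mmul_binom right_diff_distrib sum_subtractf sum_mult_indicator)
  qed
  have "\<chi> y - \<chi> z = (\<Sum>v\<in>V. \<chi> v * ((if v = y then 1 else 0) - (if v = z then 1 else 0)))"
    using V unfolding V_def by (simp add: right_diff_distrib sum_subtractf sum_mult_indicator)
  also have "\<dots> = (\<Sum>v\<in>V. \<chi> v * (\<Sum>t\<in>T. c t * ?m t v))"
    using fun_cong[OF h] by simp
  also have "\<dots> = (\<Sum>t\<in>T. \<Sum>v\<in>V. c t * (\<chi> v * ?m t v))"
    by (simp add: sum_distrib_left mult.left_commute sum.swap[of _ T])
  also have "\<dots> = (\<Sum>t\<in>T. c t * (\<Sum>v\<in>V. \<chi> v * ?m t v))"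
    by (simp add: sum_distrib_left)
  also have "\<dots> = 0" using \<chi>_term by simp
  finally have "\<chi> y = 1" unfolding \<chi>_def by simp
  then show ?thesis unfolding \<chi>_def by (simp split: if_splits)
qed

lemma overlaps_resolved_if_GS_basis:
  assumes GS: "GS_basis A {binom u [x] :: nat list \<Rightarrow> 'k::field}"
    and "2 \<le> length u" "u \<in> lists A"
  shows "overlaps_resolved u x"
  unfolding overlaps_resolved_def
proof (intro allI impI)
  fix p q assume eq: "u @ q = p @ u" and "0 < length p" "length p < length u"
  let ?f = "binom u [x] :: nat list \<Rightarrow> 'k"
  have "p = take (length p) (p @ u)" by simp
  also have "\<dots> = take (length p) u" using eq[symmetric] \<open>length p < length u\<close> by simp
  finally have pA: "p \<in> lists A" using assms(3) by (metis in_lists_conv_set in_set_takeD)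
  have "q = drop (length u) (p @ u)" using eq[symmetric] by simp
  also have "\<dots> = drop (length u - length p) u" using \<open>length p < length u\<close> by simp
  finally have qA: "q \<in> lists A" using assms(3) by (metis in_lists_conv_set in_set_dropD)
  have "length q = length p" using arg_cong[OF eq, of length] by simp
  moreover have "\<forall>a b w. a \<in> lists A \<longrightarrow> b \<in> lists A \<longrightarrow> w = lw ?f @ b \<longrightarrow> w = a @ lw ?f \<longrightarrow>
      length (lw ?f) + length (lw ?f) > length w \<longrightarrow>
      trivial_mod A {?f} w (\<lambda>v. mmul [] ?f b v - mmul a ?f [] v)"
    using GS unfolding GS_basis_def by blast
  ultimately have "trivial_mod A {?f} (u @ q) (\<lambda>v. mmul [] ?f q v - mmul p ?f [] v)"
    using pA qA eq \<open>length p < length u\<close> unfolding lw_binom[OF assms(2)] by simp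
  moreover have "(\<lambda>v. mmul [] ?f q v - mmul p ?f [] v) =
      (\<lambda>v. (if v = p @ [x] then 1 else 0) - (if v = x # q then 1 else 0))"
    using eq by (simp add: mmul_binom fun_eq_iff)
  ultimately show "(x # q, p @ [x]) \<in> (conv_below u x (u @ q))\<^sup>*"
    using trivial_mod_imp_conv_below[OF assms(2)] by simp
qed

section \<open>Normal forms of right multiples\<close>

lemma occurrence_in_snoc:
  assumes "\<not> sublist u y" "y @ [c] = P @ u @ Q" "u \<noteq> []"
  shows "y = P @ butlast u \<and> c = last u \<and> Q = []"
proof -
  have "Q = []"
  proof (rule ccontr)
    assume "Q \<noteq> []"
    then obtain Q' d where "Q = Q' @ [d]" by (metis rev_exhaust)
    then have "y = P @ u @ Q'" using assms(2) by simp
    then show False using assms(1) by auto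
  qed
  moreover have "y @ [c] = (P @ butlast u) @ [last u]"
    using assms(2,3) \<open>Q = []\<close> by (metis append.assoc append.right_neutral append_butlast_last_id)
  ultimately show ?thesis by simp
qed

lemma red_power_snoc_last:
  assumes "2 \<le> length u" "0 < j" "1 < j \<longrightarrow> x = last u"
  shows "(d @ concat (replicate j (butlast u)) @ [last u], d @ [x]) \<in> (red u x)\<^sup>*"
  using assms(2,3)
proof (induction j arbitrary: d)
  case (Suc j)
  have u: "butlast u @ [last u] = u" using assms(1) by (intro append_butlast_last_id) auto
  have base: "(d' @ butlast u @ [last u], d' @ [x]) \<in> red u x" for d'
    unfolding red_iff u by (metis append.right_neutral)
  show ?case
  proof (cases "j = 0")
    case True then show ?thesis using base[of d] by simp
  next
    case False
    then have "x = last u" using Suc.prems by simp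
    have "((d @ butlast u) @ concat (replicate j (butlast u)) @ [last u], (d @ butlast u) @ [x])
        \<in> (red u x)\<^sup>*"
      using Suc.IH False \<open>x = last u\<close> by blast
    moreover have "((d @ butlast u) @ [x], d @ [x]) \<in> red u x" using base[of d] \<open>x = last u\<close> by simp
    ultimately show ?thesis by (simp add: rtrancl_into_rtrancl)
  qed
qed simp

text \<open>Appending a letter to an irreducible word creates at most one occurrence of \<open>u\<close>, at the
  end; rewriting it can only expose a new occurrence when \<open>x\<close> is the last letter of \<open>u\<close>, and
  then the word ends in a power of \<open>butlast u\<close>.\<close>

lemma red_snoc_irreducible_cases:
  assumes "2 \<le> length u" "\<not> sublist u \<alpha>" "(\<alpha> @ [i], z) \<in> (red u x)\<^sup>*"
  shows "z = \<alpha> @ [i] \<or>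
    (\<exists>d j. \<alpha> = d @ concat (replicate j (butlast u)) \<and> 0 < j \<and> (1 < j \<longrightarrow> x = last u) \<and>
       i = last u \<and> z = d @ [x])"
  using assms(3)
proof (induction rule: rtrancl_induct)
  case (step y z)
  obtain P Q where PQ: "y = P @ u @ Q" "z = P @ [x] @ Q" using step(2) red_iff by blast
  have "u \<noteq> []" using assms(1) by auto
  from step(3) show ?case
  proof
    assume "y = \<alpha> @ [i]"
    then have "\<alpha> @ [i] = P @ u @ Q" using PQ(1) by simp
    then have "\<alpha> = P @ butlast u \<and> i = last u \<and> Q = []"
      by (rule occurrence_in_snoc[OF assms(2) _ \<open>u \<noteq> []\<close>])
    then show ?thesis using PQ(2) by (intro disjI2 exI[of _ P] exI[of _ 1]) simp
  next
    assume "\<exists>d j. \<alpha> = d @ concat (replicate j (butlast u)) \<and> 0 < j \<and> (1 < j \<longrightarrow> x = last u) \<and>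
       i = last u \<and> y = d @ [x]"
    then obtain d j where dj: "\<alpha> = d @ concat (replicate j (butlast u))" "0 < j" "i = last u" "y = d @ [x]"
      by blast
    have "\<not> sublist u d" using assms(2) dj(1) unfolding sublist_def by (metis append.assoc)
    moreover have "d @ [x] = P @ u @ Q" using PQ(1) dj(4) by simp
    ultimately have "d = P @ butlast u \<and> x = last u \<and> Q = []"
      by (rule occurrence_in_snoc[OF _ _ \<open>u \<noteq> []\<close>])
    then have "\<alpha> = P @ concat (replicate (Suc j) (butlast u)) \<and> z = P @ [x] \<and> x = last u"
      using dj(1) PQ(2) by simp
    then show ?thesis using dj(2,3) by (intro disjI2 exI[of _ P] exI[of _ "Suc j"]) simp
  qed
qed simp

section \<open>The automatic structure\<close>

definition irreducible_words :: "'a set \<Rightarrow> 'a list \<Rightarrow> 'a list set" where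
  "irreducible_words \<Sigma> u = {\<alpha> \<in> lists \<Sigma>. \<alpha> \<noteq> [] \<and> \<not> sublist u \<alpha>}"

lemma suffix_iff_suffix_window: "suffix u w \<longleftrightarrow> suffix u (drop (length w - length u) w)"
proof
  assume "suffix u w"
  then obtain z where "w = z @ u" by (auto simp: suffix_def)
  then show "suffix u (drop (length w - length u) w)" by simp
next
  assume "suffix u (drop (length w - length u) w)"
  then have "suffix u (take (length w - length u) w @ drop (length w - length u) w)"
    by (rule suffix_appendI)
  then show "suffix u w" by simp
qed

lemma window_snoc:
  "drop (length (w @ [c]) - k) (w @ [c]) =
     drop (length (drop (length w - k) w @ [c]) - k) (drop (length w - k) w @ [c])"
  by (cases "k \<le> length w") (auto simp: Suc_diff_le)

text \<open>An automaton for the irreducible words remembers whether \<open>u\<close> has occurred and the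
  last \<open>length u\<close> letters read.\<close>

lemma regular_irreducible_words:
  assumes "finite \<Sigma>"
  shows "regular \<Sigma> (irreducible_words \<Sigma> u)"
proof -
  define win where "win w = drop (length w - length u) w" for w :: "'a list"
  have sublist_snoc_win: "sublist u (w @ [c]) \<longleftrightarrow> sublist u w \<or> suffix u (win w @ [c])" for w c
    using suffix_iff_suffix_window[of u "w @ [c]"] suffix_iff_suffix_window[of u "win w @ [c]"]
      window_snoc[of w c "length u"]
    unfolding win_def sublist_snoc by auto
  show ?thesis
  proof (rule regularI_state[where st = "\<lambda>w. (w = [], sublist u w, win w)"
        and \<delta> = "\<lambda>(e, s, v) c. (False, s \<or> suffix u (v @ [c]), win (v @ [c]))"
        and P = "\<lambda>(e, s, v). \<not> e \<and> \<not> s"])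
    have "(\<lambda>w. (w = [], sublist u w, win w)) ` lists \<Sigma> \<subseteq>
        UNIV \<times> UNIV \<times> {v. set v \<subseteq> \<Sigma> \<and> length v \<le> length u}"
      unfolding win_def by (auto dest: in_set_dropD)
    then show "finite ((\<lambda>w. (w = [], sublist u w, win w)) ` lists \<Sigma>)"
      by (rule finite_subset) (use finite_lists_length_le[OF assms] in simp)
  next
    fix w c
    show "(w @ [c] = [], sublist u (w @ [c]), win (w @ [c])) =
        (\<lambda>(e, s, v) c. (False, s \<or> suffix u (v @ [c]), win (v @ [c]))) (w = [], sublist u w, win w) c"
      using sublist_snoc_win window_snoc[of w c "length u"] unfolding win_def by simp
  qed (auto simp: irreducible_words_def)
qed

lemma eqS_singletons_iff:
  "eqS R (\<lambda>i. [i]) \<alpha> \<beta> \<longleftrightarrow> \<alpha> \<noteq> [] \<and> \<beta> \<noteq> [] \<and> (\<alpha>, \<beta>) \<in> cong_gen R"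
  unfolding eqS_def by simp

lemma pad_power_snoc:
  assumes "b \<noteq> []"
  shows "pad (d @ concat (replicate (Suc m) b)) (d @ [x]) =
    pad d d @ pad b [x] @ concat (replicate m (map (\<lambda>c. (Some c, None)) b))"
  using assms by (simp add: pad_append_same pad_append_left map_concat Suc_leI)

context
  fixes n :: nat and u :: "nat list" and x :: nat
  assumes long: "2 \<le> length u" and u_alph: "set u \<subseteq> {0..<n}" and x_alph: "x < n"
    and resolved: "overlaps_resolved u x"
begin

abbreviation NF :: "nat list set" where
  "NF \<equiv> irreducible_words {0..<n} u"

abbreviation diagonal :: "(nat option \<times> nat option) set" where
  "diagonal \<equiv> (\<lambda>c. (Some c, Some c)) ` {0..<n}"

lemma NF_lists: "NF \<subseteq> lists {0..<n}"
  unfolding irreducible_words_def by blast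

lemma eqS_snoc_iff:
  assumes "\<alpha> \<in> NF" "\<beta> \<in> NF"
  shows "eqS {(u, [x])} (\<lambda>i. [i]) (\<alpha> @ [i]) \<beta> \<longleftrightarrow> \<beta> = \<alpha> @ [i] \<or>
    (\<exists>d j. \<alpha> = d @ concat (replicate j (butlast u)) \<and> 0 < j \<and> (1 < j \<longrightarrow> x = last u) \<and>
       i = last u \<and> \<beta> = d @ [x])"
proof
  assume "eqS {(u, [x])} (\<lambda>i. [i]) (\<alpha> @ [i]) \<beta>"
  then have "(\<alpha> @ [i], \<beta>) \<in> (red u x)\<^sup>*"
    using cong_gen_imp_red_irreducible[OF long resolved] assms(2)
    unfolding eqS_singletons_iff irreducible_words_def by blast
  then show "\<beta> = \<alpha> @ [i] \<or> (\<exists>d j. \<alpha> = d @ concat (replicate j (butlast u)) \<and> 0 < j \<and>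
      (1 < j \<longrightarrow> x = last u) \<and> i = last u \<and> \<beta> = d @ [x])"
    using red_snoc_irreducible_cases[OF long] assms(1) unfolding irreducible_words_def by blast
next
  assume "\<beta> = \<alpha> @ [i] \<or> (\<exists>d j. \<alpha> = d @ concat (replicate j (butlast u)) \<and> 0 < j \<and>
      (1 < j \<longrightarrow> x = last u) \<and> i = last u \<and> \<beta> = d @ [x])"
  then have "(\<alpha> @ [i], \<beta>) \<in> (red u x)\<^sup>*"
    using red_power_snoc_last[OF long] by auto
  then show "eqS {(u, [x])} (\<lambda>i. [i]) (\<alpha> @ [i]) \<beta>"
    using rtrancl_red_imp_cong_gen assms(2) unfolding eqS_singletons_iff irreducible_words_def
    by blast
qed

lemma padded_equal_eq:
  "{pad \<alpha> \<beta> | \<alpha> \<beta>. \<alpha> \<in> NF \<and> \<beta> \<in> NF \<and> eqS {(u, [x])} (\<lambda>i. [i]) (\<alpha> @ []) \<beta>} =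
    lists diagonal \<inter> tracks_in {0..<n} NF NF"
proof -
  have equal: "eqS {(u, [x])} (\<lambda>i. [i]) \<alpha> \<beta> \<longleftrightarrow> \<alpha> = \<beta>" if "\<alpha> \<in> NF" "\<beta> \<in> NF" for \<alpha> \<beta>
    using that cong_gen_irreducible_eq[OF long resolved] unfolding eqS_singletons_iff cong_gen_def
    by (auto simp: irreducible_words_def)
  note tracks = pad_in_tracks_in_iff[OF NF_lists NF_lists]
  show ?thesis
  proof (intro set_eqI iffI)
    fix p assume "p \<in> {pad \<alpha> \<beta> | \<alpha> \<beta>. \<alpha> \<in> NF \<and> \<beta> \<in> NF \<and> eqS {(u, [x])} (\<lambda>i. [i]) (\<alpha> @ []) \<beta>}"
    then obtain \<alpha> where "p = pad \<alpha> \<alpha>" "\<alpha> \<in> NF" using equal by auto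
    moreover have "\<alpha> \<in> lists {0..<n}" using \<open>\<alpha> \<in> NF\<close> NF_lists by blast
    ultimately have "p \<in> lists diagonal" unfolding lists_diagonal_iff by blast
    then show "p \<in> lists diagonal \<inter> tracks_in {0..<n} NF NF"
      using tracks \<open>p = pad \<alpha> \<alpha>\<close> \<open>\<alpha> \<in> NF\<close> by simp
  next
    fix p assume p: "p \<in> lists diagonal \<inter> tracks_in {0..<n} NF NF"
    then have "p \<in> lists diagonal" by blast
    then obtain d where "p = pad d d" unfolding lists_diagonal_iff by blast
    moreover have "d \<in> NF" using p tracks \<open>p = pad d d\<close> by simp
    ultimately show "p \<in> {pad \<alpha> \<beta> | \<alpha> \<beta>. \<alpha> \<in> NF \<and> \<beta> \<in> NF \<and> eqS {(u, [x])} (\<lambda>i. [i]) (\<alpha> @ []) \<beta>}"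
      using equal by auto
  qed
qed

text \<open>Right multiplication by the generator \<open>i\<close> either just appends \<open>i\<close> or, when \<open>i\<close> completes
  a suffix \<open>(butlast u)\<^sup>j\<close> to an occurrence of \<open>u\<close>, replaces that suffix by \<open>x\<close>.\<close>

definition padded_power_suffixes :: "(nat option \<times> nat option) list set" where
  "padded_power_suffixes = conc {pad (butlast u) [x]}
     (if x = last u then range (\<lambda>m. concat (replicate m (map (\<lambda>c. (Some c, None)) (butlast u))))
      else {[]})"

lemma regular_padded_power_suffixes: "regular (pad_alph {0..<n}) padded_power_suffixes"
proof -
  have "butlast u \<in> lists {0..<n}" using u_alph by (auto dest: in_set_butlastD)
  moreover have "[x] \<in> lists {0..<n}" using x_alph by simp
  ultimately have "pad (butlast u) [x] \<in> lists (pad_alph {0..<n})"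
    by (rule pad_in_lists)
  moreover have "regular (pad_alph {0..<n})
      (if x = last u then range (\<lambda>m. concat (replicate m (map (\<lambda>c. (Some c, None)) (butlast u))))
       else {[]})"
  proof -
    have "map (\<lambda>c. (Some c, None)) (butlast u) \<in> lists (pad_alph {0..<n})"
      using \<open>butlast u \<in> lists {0..<n}\<close> by (auto simp: pad_alph_def)
    from regular_powers[OF this] show ?thesis
      using regular_singleton[of "[]" "pad_alph {0..<n}"] by simp
  qed
  ultimately show ?thesis
    unfolding padded_power_suffixes_def by (intro regular_conc regular_singleton)
qed

lemma conc_diagonal_snoc_iff:
  "p \<in> conc (lists diagonal) {[(None, Some i)]} \<longleftrightarrow> (\<exists>\<alpha>\<in>lists {0..<n}. p = pad \<alpha> (\<alpha> @ [i]))"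
proof -
  have "pad \<alpha> (\<alpha> @ [i]) = pad \<alpha> \<alpha> @ [(None, Some i)]" for \<alpha>
    using pad_append_same[of \<alpha> "[]" "[i]"] by simp
  then show ?thesis unfolding conc_def lists_diagonal_iff by auto
qed

lemma conc_diagonal_power_suffixes_iff:
  "p \<in> conc (lists diagonal) padded_power_suffixes \<longleftrightarrow>
    (\<exists>d\<in>lists {0..<n}. \<exists>j. 0 < j \<and> (1 < j \<longrightarrow> x = last u) \<and>
       p = pad (d @ concat (replicate j (butlast u))) (d @ [x]))"
proof -
  let ?pow = "\<lambda>m. concat (replicate m (map (\<lambda>c. (Some c, None :: nat option)) (butlast u)))"
  have b: "butlast u \<noteq> []" using long by (cases u rule: rev_cases) auto
  have tail: "t \<in> (if x = last u then range ?pow else {[]}) \<longleftrightarrow> (\<exists>m. (0 < m \<longrightarrow> x = last u) \<and> t = ?pow m)"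
    for t by (cases "x = last u") (auto intro: exI[of _ 0])
  have shift: "(\<exists>m. (0 < m \<longrightarrow> x = last u) \<and> p = pad (d @ concat (replicate (Suc m) (butlast u))) (d @ [x]))
      \<longleftrightarrow> (\<exists>j. 0 < j \<and> (1 < j \<longrightarrow> x = last u) \<and> p = pad (d @ concat (replicate j (butlast u))) (d @ [x]))"
    (is "(\<exists>m. _ \<and> ?P (Suc m)) \<longleftrightarrow> _") for d
  proof
    assume "\<exists>m. (0 < m \<longrightarrow> x = last u) \<and> ?P (Suc m)"
    then obtain m where "0 < m \<longrightarrow> x = last u" "?P (Suc m)" by blast
    then show "\<exists>j. 0 < j \<and> (1 < j \<longrightarrow> x = last u) \<and> ?P j" by (intro exI[of _ "Suc m"]) simp
  next
    assume "\<exists>j. 0 < j \<and> (1 < j \<longrightarrow> x = last u) \<and> ?P j"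
    then obtain j where "0 < j" "1 < j \<longrightarrow> x = last u" "?P j" by blast
    then show "\<exists>m. (0 < m \<longrightarrow> x = last u) \<and> ?P (Suc m)" by (intro exI[of _ "j - 1"]) simp
  qed
  have "p \<in> conc (lists diagonal) padded_power_suffixes \<longleftrightarrow>
      (\<exists>d\<in>lists {0..<n}. \<exists>m. (0 < m \<longrightarrow> x = last u) \<and> p = pad d d @ pad (butlast u) [x] @ ?pow m)"
    unfolding conc_def padded_power_suffixes_def lists_diagonal_iff tail by blast
  also have "\<dots> \<longleftrightarrow> (\<exists>d\<in>lists {0..<n}. \<exists>m. (0 < m \<longrightarrow> x = last u) \<and>
      p = pad (d @ concat (replicate (Suc m) (butlast u))) (d @ [x]))"
    unfolding pad_power_snoc[OF b] ..
  finally show ?thesis unfolding shift .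
qed

lemma padded_snoc_eq:
  "{pad \<alpha> \<beta> | \<alpha> \<beta>. \<alpha> \<in> NF \<and> \<beta> \<in> NF \<and> eqS {(u, [x])} (\<lambda>i. [i]) (\<alpha> @ [i]) \<beta>} =
    (conc (lists diagonal) {[(None, Some i)]} \<union>
     (if i = last u then conc (lists diagonal) padded_power_suffixes else {}))
    \<inter> tracks_in {0..<n} NF NF"
  (is "?lhs = ?rhs")
proof -
  note appended = conc_diagonal_snoc_iff and rewritten = conc_diagonal_power_suffixes_iff
  show ?thesis
  proof (intro set_eqI iffI)
    fix p assume "p \<in> ?lhs"
    then obtain \<alpha> \<beta> where p: "p = pad \<alpha> \<beta>" "\<alpha> \<in> NF" "\<beta> \<in> NF"
      and cases: "\<beta> = \<alpha> @ [i] \<or> (\<exists>d j. \<alpha> = d @ concat (replicate j (butlast u)) \<and> 0 < j \<and>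
        (1 < j \<longrightarrow> x = last u) \<and> i = last u \<and> \<beta> = d @ [x])"
      using eqS_snoc_iff by blast
    have "p \<in> tracks_in {0..<n} NF NF" using p pad_in_tracks_in_iff[OF NF_lists NF_lists] by simp
    moreover have "\<alpha> \<in> lists {0..<n}" using p(2) NF_lists by blast
    ultimately show "p \<in> ?rhs" using cases p(1) appended rewritten by auto
  next
    fix p assume "p \<in> ?rhs"
    then have tr: "p \<in> tracks_in {0..<n} NF NF"
      and "(\<exists>\<alpha>. p = pad \<alpha> (\<alpha> @ [i])) \<or> (i = last u \<and> (\<exists>d j. 0 < j \<and> (1 < j \<longrightarrow> x = last u) \<and>
         p = pad (d @ concat (replicate j (butlast u))) (d @ [x])))"
      using appended rewritten by (auto split: if_splits)
    then obtain \<alpha> \<beta> where "p = pad \<alpha> \<beta>" "\<beta> = \<alpha> @ [i] \<or> (\<exists>d j. \<alpha> = d @ concat (replicate j (butlast u)) \<and>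
        0 < j \<and> (1 < j \<longrightarrow> x = last u) \<and> i = last u \<and> \<beta> = d @ [x])"
      by blast
    moreover have "\<alpha> \<in> NF" "\<beta> \<in> NF" using tr pad_in_tracks_in_iff[OF NF_lists NF_lists] \<open>p = pad \<alpha> \<beta>\<close>
      by simp_all
    ultimately show "p \<in> ?lhs" using eqS_snoc_iff by blast
  qed
qed

lemma Pref_NF: "\<beta> \<in> Pref NF \<and> \<beta> \<noteq> [] \<longleftrightarrow> \<beta> \<in> NF"
proof
  assume "\<beta> \<in> Pref NF \<and> \<beta> \<noteq> []"
  then obtain s where "\<beta> @ s \<in> NF" "\<beta> \<noteq> []" unfolding Pref_def by blast
  moreover have "sublist u (\<beta> @ s)" if "sublist u \<beta>"
    using that unfolding sublist_def by (metis append.assoc)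
  ultimately show "\<beta> \<in> NF" unfolding irreducible_words_def by auto
next
  assume "\<beta> \<in> NF"
  moreover have "\<beta> = \<beta> @ []" by simp
  ultimately show "\<beta> \<in> Pref NF \<and> \<beta> \<noteq> []" unfolding Pref_def irreducible_words_def by blast
qed

lemma regular_NF: "regular {0..<n} NF"
  by (rule regular_irreducible_words) simp

lemma diagonal_pad_alph: "diagonal \<subseteq> pad_alph {0..<n}"
  unfolding pad_alph_def by auto

lemma regular_padded_equal:
  "regular (pad_alph {0..<n}) {pad \<alpha> \<beta> | \<alpha> \<beta>. \<alpha> \<in> NF \<and> \<beta> \<in> NF \<and> eqS {(u, [x])} (\<lambda>i. [i]) (\<alpha> @ []) \<beta>}"
  unfolding padded_equal_eq
  by (rule regular_Int[OF regular_lists[OF diagonal_pad_alph] regular_tracks_in[OF regular_NF regular_NF]])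

lemma regular_padded_snoc:
  assumes "i < n"
  shows "regular (pad_alph {0..<n}) {pad \<alpha> \<beta> | \<alpha> \<beta>. \<alpha> \<in> NF \<and> \<beta> \<in> NF \<and> eqS {(u, [x])} (\<lambda>i. [i]) (\<alpha> @ [i]) \<beta>}"
proof -
  have "regular (pad_alph {0..<n}) (conc (lists diagonal) {[(None, Some i)]})"
    using assms by (intro regular_conc regular_lists[OF diagonal_pad_alph] regular_singleton)
      (auto simp: pad_alph_def)
  moreover have "regular (pad_alph {0..<n}) (conc (lists diagonal) padded_power_suffixes)"
    by (rule regular_conc[OF regular_lists[OF diagonal_pad_alph] regular_padded_power_suffixes])
  ultimately show ?thesis
    unfolding padded_snoc_eq
    by (auto intro!: regular_Int regular_Un regular_tracks_in regular_NF regular_empty)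
qed

lemma NF_represents:
  assumes "w \<in> lists {0..<n} - {[]}"
  shows "\<exists>\<alpha>\<in>NF. (concat (map (\<lambda>i. [i]) \<alpha>), w) \<in> cong_gen {(u, [x])}"
proof -
  obtain \<alpha> where red: "(w, \<alpha>) \<in> (red u x)\<^sup>*" and irr: "\<not> sublist u \<alpha>"
    using normal_forms_nonempty[OF long] unfolding normal_forms_def by blast
  have "\<alpha> \<in> lists {0..<n}" using rtrancl_red_lists[OF red] assms x_alph by simp
  moreover have "\<alpha> \<noteq> []" using rtrancl_red_nonempty[OF red] assms by simp
  moreover have "(concat (map (\<lambda>i. [i]) \<alpha>), w) \<in> cong_gen {(u, [x])}"
    using cong_gen_sym[OF rtrancl_red_imp_cong_gen[OF red]] by simp
  ultimately show ?thesis using irr unfolding irreducible_words_def by blast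
qed

lemma prefix_automatic_NF: "prefix_automatic {0..<n} {(u, [x])}"
proof -
  let ?R = "{(u, [x])}" and ?g = "\<lambda>i::nat. [i]"
  have automatic: "automatic_structure {0..<n} ?R n ?g NF"
    unfolding automatic_structure_def
    using regular_NF NF_lists NF_represents regular_padded_equal regular_padded_snoc
    by (auto simp: irreducible_words_def)
  have prefixes: "{pad \<alpha> \<beta> | \<alpha> \<beta>. \<alpha> \<in> NF \<and> \<beta> \<in> Pref NF \<and> eqS ?R ?g \<alpha> \<beta>} =
      {pad \<alpha> \<beta> | \<alpha> \<beta>. \<alpha> \<in> NF \<and> \<beta> \<in> NF \<and> eqS ?R ?g (\<alpha> @ []) \<beta>}"
    using Pref_NF unfolding eqS_singletons_iff by auto
  show ?thesis unfolding prefix_automatic_def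
  proof (intro exI conjI)
    show "automatic_structure {0..<n} ?R n ?g NF" by (rule automatic)
    show "regular (pad_alph {0..<n}) {pad \<alpha> \<beta> | \<alpha> \<beta>. \<alpha> \<in> NF \<and> \<beta> \<in> Pref NF \<and> eqS ?R ?g \<alpha> \<beta>}"
      unfolding prefixes by (rule regular_padded_equal)
  qed
qed

end

theorem theorem3p1p5:
  fixes n k :: nat and u :: "nat list" and x :: nat
  assumes "k \<ge> 2" and "length u = k" and "set u \<subseteq> alph n" and "x \<in> alph n"
    and "GS_basis_rel TYPE('k::field) (alph n) u [x]"
  shows "prefix_automatic (alph n) {(u, [x])}"
proof -
  have "2 \<le> length u" using assms(1,2) by simp
  moreover have "overlaps_resolved u x"
    using overlaps_resolved_if_GS_basis[OF _ \<open>2 \<le> length u\<close>] assms(3,5)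
    unfolding GS_basis_rel_def by blast
  ultimately show ?thesis
    using prefix_automatic_NF assms(3,4) unfolding alph_def by simp
qed

end
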